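(* Let $0<b\le c$ and let $\mu$ be a real number in $[\lambda_-(b),\lambda_+(b)]$. Then $\zeta_{(\mu,c)}$ is defined, $\int_0^c\zeta_{(\mu,c)}-\int_0^b\zeta_{(\mu,b)}=\mu(c-b)$, and $\zeta_{(\mu,c)}^{-1}(\{\mu\})$ is a closed interval of length at least $c-b$.
   Context: Fix $\kappa_0\in(0,1)$ and $r_0,r_b\in\mathbb{R}$ (the same $r_b$ is used for every value of the right endpoint). Let $F(u)=u/\sqrt{1-u^2}$ for $|u|<1$, $F(u)=+\infty$ for $u\ge1$, $F(u)=-\infty$ for $u\le-1$; $s_0=r_0/\sqrt{1+r_0^2}$, $s_b=r_b/\sqrt{1+r_b^2}$. Define $g_\pm(x)=F(\pm\kappa_0x+s_0)$ and, for each $c>0$, $h^c_\pm(x)=F(\mp\kappa_0(x-c)+s_b)$. $\lambda_+(c)$ is the common real value of $g_+$ and $h^c_+$ at the point where their graphs meet, or $+\infty$ if they do not meet; $\lambda_-(c)$ likewise for $g_-,h^c_-$, or $-\infty$. Assume there exists an absolutely continuous $f:[0,b]\to\mathbb{R}$ with $f'\in L^2$, $|f'|\le\kappa_0(1+f^2)^{3/2}$ a.e., $f(0)=r_0$, $f(b)=r_b$. For $c>0$ and real $\mu\in[\lambda_-(c),\lambda_+(c)]$, $\zeta_{(\mu,c)}:[0,c]\to\mathbb{R}$ is $\zeta_{(\mu,c)}(x)=\operatorname{mid}\big(h^c_-(x),g_-(x),\mu,g_+(x),h^c_+(x)\big)$, the median of five extended reals. *)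

theory Defs
  imports "HOL-Analysis.Analysis"
begin

definition abs_continuous_on :: "real \<Rightarrow> real \<Rightarrow> (real \<Rightarrow> real) \<Rightarrow> bool" where
  "abs_continuous_on a b f \<longleftrightarrow>
     (\<forall>\<epsilon>>0. \<exists>\<delta>>0. \<forall>(n::nat) (u::nat \<Rightarrow> real) (v::nat \<Rightarrow> real).
        (\<forall>i<n. a \<le> u i \<and> u i \<le> v i \<and> v i \<le> b) \<and>
        (\<forall>i<n. \<forall>j<n. i \<noteq> j \<longrightarrow> v i \<le> u j \<or> v j \<le> u i) \<and>
        (\<Sum>i<n. v i - u i) < \<delta>
        \<longrightarrow> (\<Sum>i<n. \<bar>f (v i) - f (u i)\<bar>) < \<epsilon>)"

definition sfun :: "real \<Rightarrow> real" where
  "sfun r = r / sqrt (1 + r\<^sup>2)"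

definition Fe :: "real \<Rightarrow> ereal" where
  "Fe u = (if 1 \<le> u then \<infinity> else if u \<le> -1 then -\<infinity> else ereal (u / sqrt (1 - u\<^sup>2)))"

definition gp :: "real \<Rightarrow> real \<Rightarrow> real \<Rightarrow> ereal" where
  "gp k r0 x = Fe (k * x + sfun r0)"
definition gm :: "real \<Rightarrow> real \<Rightarrow> real \<Rightarrow> ereal" where
  "gm k r0 x = Fe (- k * x + sfun r0)"
definition hp :: "real \<Rightarrow> real \<Rightarrow> real \<Rightarrow> real \<Rightarrow> ereal" where
  "hp k rb c x = Fe (- k * (x - c) + sfun rb)"
definition hm :: "real \<Rightarrow> real \<Rightarrow> real \<Rightarrow> real \<Rightarrow> ereal" where
  "hm k rb c x = Fe (k * (x - c) + sfun rb)"

definition lam_plus :: "real \<Rightarrow> real \<Rightarrow> real \<Rightarrow> real \<Rightarrow> ereal" where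
  "lam_plus k r0 rb c =
     (if \<exists>x v. gp k r0 x = ereal v \<and> hp k rb c x = ereal v
      then ereal (THE v. \<exists>x. gp k r0 x = ereal v \<and> hp k rb c x = ereal v)
      else \<infinity>)"
definition lam_minus :: "real \<Rightarrow> real \<Rightarrow> real \<Rightarrow> real \<Rightarrow> ereal" where
  "lam_minus k r0 rb c =
     (if \<exists>x v. gm k r0 x = ereal v \<and> hm k rb c x = ereal v
      then ereal (THE v. \<exists>x. gm k r0 x = ereal v \<and> hm k rb c x = ereal v)
      else -\<infinity>)"

definition mid5 :: "ereal \<Rightarrow> ereal \<Rightarrow> ereal \<Rightarrow> ereal \<Rightarrow> ereal \<Rightarrow> ereal" where
  "mid5 a b c d e = sort [a, b, c, d, e] ! 2"

definition zeta :: "real \<Rightarrow> real \<Rightarrow> real \<Rightarrow> real \<Rightarrow> real \<Rightarrow> real \<Rightarrow> ereal" where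
  "zeta k r0 rb \<mu> c x = mid5 (hm k rb c x) (gm k r0 x) (ereal \<mu>) (gp k r0 x) (hp k rb c x)"

definition zeta_defined :: "real \<Rightarrow> real \<Rightarrow> real \<Rightarrow> real \<Rightarrow> real \<Rightarrow> bool" where
  "zeta_defined k r0 rb \<mu> c \<longleftrightarrow> 0 < c \<and> lam_minus k r0 rb c \<le> ereal \<mu> \<and> ereal \<mu> \<le> lam_plus k r0 rb c \<and>
     (\<forall>x\<in>{0..c}. \<bar>zeta k r0 rb \<mu> c x\<bar> \<noteq> \<infinity>)"

end

theory Submission
  imports Defs
begin

text \<open>In the coordinate \<open>s = r / sqrt (1 + r\<^sup>2)\<close> the curvature bound
  \<open>\<bar>f'\<bar> \<le> \<kappa>0 (1 + f\<^sup>2)\<^bsup>3/2\<^esup>\<close> says that \<open>s \<circ> f\<close> has slope at most \<open>\<kappa>0\<close>; since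
  \<open>f\<close> is absolutely continuous this almost-everywhere bound integrates to
  \<open>\<bar>s rb - s r0\<bar> \<le> \<kappa>0 b\<close>. In the same coordinate \<open>g\<^sub>\<plusminus>\<close> and \<open>h\<^sub>\<plusminus>\<close> are affine of slope
  \<open>\<plusminus>\<kappa>0\<close>, so \<open>\<zeta>\<^sub>(\<^sub>\<mu>\<^sub>,\<^sub>c\<^sub>)\<close> is the level \<open>s \<mu>\<close> clamped between lines through \<open>s r0\<close> and
  \<open>s rb\<close>, and \<open>\<mu> \<in> [\<lambda>\<^sub>-(c), \<lambda>\<^sub>+(c)]\<close> becomes \<open>\<bar>s \<mu> - s r0\<bar> + \<bar>s \<mu> - s rb\<bar> \<le> \<kappa>0 c\<close>.
  Then \<open>\<zeta>\<^sub>(\<^sub>\<mu>\<^sub>,\<^sub>c\<^sub>)\<close> equals \<open>\<mu>\<close> exactly on \<open>[\<alpha>, c - \<beta>]\<close> with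
  \<open>\<alpha> = \<bar>s \<mu> - s r0\<bar> / \<kappa>0\<close>, \<open>\<beta> = \<bar>s \<mu> - s rb\<bar> / \<kappa>0\<close>, while left of this plateau it agrees
  with \<open>\<zeta>\<^sub>(\<^sub>\<mu>\<^sub>,\<^sub>b\<^sub>)\<close> and right of it with \<open>\<zeta>\<^sub>(\<^sub>\<mu>\<^sub>,\<^sub>b\<^sub>)\<close> shifted by \<open>c - b\<close>: passing from
  \<open>b\<close> to \<open>c\<close> only lengthens the plateau.\<close>

hide_const (open) Polynomial.content

section \<open>The coordinate \<open>sfun\<close>\<close>

lemma powr_three_halves: "(1 + r\<^sup>2) powr (3/2) = (1 + r\<^sup>2) * sqrt (1 + r\<^sup>2)"
  using powr_add[of "1 + r\<^sup>2" 1 "1/2"] by (simp add: add_pos_nonneg powr_half_sqrt)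

lemma sfun_has_real_derivative:
  "(sfun has_real_derivative 1 / (1 + r\<^sup>2) powr (3/2)) (at r)"
proof -
  have p: "0 < 1 + r\<^sup>2" by (simp add: add_pos_nonneg)
  have "((\<lambda>r. r / sqrt (1 + r\<^sup>2)) has_real_derivative
      (1 * sqrt (1 + r\<^sup>2) - r * (inverse (sqrt (1 + r\<^sup>2)) / 2 * (2 * r))) / (sqrt (1 + r\<^sup>2))\<^sup>2) (at r)"
    using p by (auto intro!: derivative_eq_intros)
  moreover have "(1 * sqrt (1 + r\<^sup>2) - r * (inverse (sqrt (1 + r\<^sup>2)) / 2 * (2 * r))) / (sqrt (1 + r\<^sup>2))\<^sup>2
     = 1 / (1 + r\<^sup>2) powr (3/2)"
    unfolding powr_three_halves using p by (simp add: field_simps power2_eq_square)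
  ultimately show ?thesis unfolding sfun_def[abs_def] by simp
qed

lemma sfun_deriv_bounds:
  fixes r :: real
  shows "0 < 1 / (1 + r\<^sup>2) powr (3/2)" "1 / (1 + r\<^sup>2) powr (3/2) \<le> 1"
proof -
  have "1 \<le> (1 + r\<^sup>2) powr (3/2)" by (rule ge_one_powr_ge_zero) auto
  then show "0 < 1 / (1 + r\<^sup>2) powr (3/2)" "1 / (1 + r\<^sup>2) powr (3/2) \<le> 1"
    by (auto simp: divide_le_eq_1)
qed

lemma sfun_strict_mono: "strict_mono sfun"
  using DERIV_pos_imp_increasing[of _ _ sfun] sfun_has_real_derivative sfun_deriv_bounds
  by (metis strict_monoI)

lemma sfun_le_iff: "sfun x \<le> sfun y \<longleftrightarrow> x \<le> y"
  using sfun_strict_mono by (rule strict_mono_less_eq)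

lemma sfun_lipschitz: "\<bar>sfun x - sfun y\<bar> \<le> \<bar>x - y\<bar>"
  using field_differentiable_bound[of UNIV sfun "\<lambda>r. 1 / (1 + r\<^sup>2) powr (3/2)" 1 x y]
    sfun_has_real_derivative sfun_deriv_bounds by auto

lemma abs_sfun_less_1: "\<bar>sfun r\<bar> < 1"
proof -
  have "\<bar>r\<bar> < sqrt (1 + r\<^sup>2)"
    using real_sqrt_less_mono[of "r\<^sup>2" "1 + r\<^sup>2"] by simp
  then show ?thesis unfolding sfun_def by (simp add: abs_div divide_less_eq add_pos_nonneg)
qed

definition sfun_inv :: "real \<Rightarrow> real" where
  "sfun_inv u = u / sqrt (1 - u\<^sup>2)"

lemma sfun_sfun_inv: "\<bar>u\<bar> < 1 \<Longrightarrow> sfun (sfun_inv u) = u"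
proof -
  assume "\<bar>u\<bar> < 1"
  then have w: "0 < sqrt (1 - u\<^sup>2)" "(sqrt (1 - u\<^sup>2))\<^sup>2 = 1 - u\<^sup>2"
    by (simp_all add: abs_square_less_1 less_imp_le)
  then have "sqrt (1 + (sfun_inv u)\<^sup>2) = 1 / sqrt (1 - u\<^sup>2)"
    unfolding sfun_inv_def by (intro real_sqrt_unique) (auto simp: field_simps power2_eq_square)
  then show ?thesis unfolding sfun_def sfun_inv_def using w by simp
qed

lemma sfun_inv_sfun: "sfun_inv (sfun r) = r"
proof -
  have q: "0 < sqrt (1 + r\<^sup>2)" "(sqrt (1 + r\<^sup>2))\<^sup>2 = 1 + r\<^sup>2"
    by (simp_all add: add_pos_nonneg)
  then have "sqrt (1 - (sfun r)\<^sup>2) = 1 / sqrt (1 + r\<^sup>2)"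
    unfolding sfun_def by (intro real_sqrt_unique) (auto simp: field_simps power2_eq_square)
  then show ?thesis unfolding sfun_def sfun_inv_def using q by simp
qed

lemma sfun_inv_le_iff: "\<bar>u\<bar> < 1 \<Longrightarrow> \<bar>v\<bar> < 1 \<Longrightarrow> sfun_inv u \<le> sfun_inv v \<longleftrightarrow> u \<le> v"
  by (metis sfun_sfun_inv sfun_le_iff)

lemma sfun_inv_eq_iff: "\<bar>u\<bar> < 1 \<Longrightarrow> \<bar>v\<bar> < 1 \<Longrightarrow> sfun_inv u = sfun_inv v \<longleftrightarrow> u = v"
  by (metis sfun_sfun_inv)

lemma continuous_on_sfun_inv: "continuous_on {-1<..<1} sfun_inv"
proof -
  have "sqrt (1 - u\<^sup>2) \<noteq> 0" if "u \<in> {-1<..<1}" for u :: real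
    using that abs_square_less_1[of u] by auto
  then show ?thesis unfolding sfun_inv_def by (intro continuous_intros) auto
qed

lemma Fe_eq_ereal_iff: "Fe u = ereal v \<longleftrightarrow> \<bar>u\<bar> < 1 \<and> v = sfun_inv u"
  unfolding Fe_def sfun_inv_def by auto

lemma Fe_sfun: "Fe (sfun r) = ereal r"
  using Fe_eq_ereal_iff abs_sfun_less_1 sfun_inv_sfun by metis

lemma mono_Fe: "mono Fe"
proof
  fix u v :: real assume "u \<le> v"
  then show "Fe u \<le> Fe v"
    using sfun_inv_le_iff[of u v] by (auto simp: Fe_def sfun_inv_def[symmetric])
qed

lemma Fe_crossing_iff:
  assumes "k \<noteq> 0"
  shows "(\<exists>x. Fe (k * x + a) = ereal v \<and> Fe (- k * x + a') = ereal v)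
    \<longleftrightarrow> \<bar>(a + a') / 2\<bar> < 1 \<and> v = sfun_inv ((a + a') / 2)"
proof -
  have meet: "k * x + a = - k * x + a' \<longleftrightarrow> x = (a' - a) / (2 * k)" for x
    using assms by (auto simp: field_simps)
  have mid: "k * ((a' - a) / (2 * k)) + a = (a + a') / 2"
    "- k * ((a' - a) / (2 * k)) + a' = (a + a') / 2"
    using assms by (simp_all add: field_simps)
  show ?thesis
    unfolding Fe_eq_ereal_iff using meet mid sfun_inv_eq_iff by (smt (verit))
qed

lemma lam_plus_eq:
  fixes k r0 rb c :: real
  assumes "0 < k"
  defines "u \<equiv> (k * c + sfun r0 + sfun rb) / 2"
  shows "lam_plus k r0 rb c = (if \<bar>u\<bar> < 1 then ereal (sfun_inv u) else \<infinity>)"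
proof -
  have "(\<exists>x. gp k r0 x = ereal v \<and> hp k rb c x = ereal v) \<longleftrightarrow> \<bar>u\<bar> < 1 \<and> v = sfun_inv u" for v
    using Fe_crossing_iff[of k "sfun r0" v "k * c + sfun rb"] assms
    unfolding gp_def hp_def u_def by (simp add: algebra_simps)
  then show ?thesis unfolding lam_plus_def by auto
qed

lemma lam_minus_eq:
  fixes k r0 rb c :: real
  assumes "0 < k"
  defines "u \<equiv> (sfun r0 + sfun rb - k * c) / 2"
  shows "lam_minus k r0 rb c = (if \<bar>u\<bar> < 1 then ereal (sfun_inv u) else -\<infinity>)"
proof -
  have "(\<exists>x. gm k r0 x = ereal v \<and> hm k rb c x = ereal v) \<longleftrightarrow> \<bar>u\<bar> < 1 \<and> v = sfun_inv u" for v
    using Fe_crossing_iff[of "- k" "sfun r0" v "sfun rb - k * c"] assms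
    unfolding gm_def hm_def u_def by (simp add: algebra_simps)
  then show ?thesis unfolding lam_minus_def by auto
qed

lemma ereal_le_lam_plus_iff:
  assumes "0 < k" "\<bar>sfun rb - sfun r0\<bar> \<le> k * c"
  shows "ereal \<mu> \<le> lam_plus k r0 rb c \<longleftrightarrow> 2 * sfun \<mu> \<le> k * c + sfun r0 + sfun rb"
proof -
  define u where "u = (k * c + sfun r0 + sfun rb) / 2"
  have "-1 < u"
    using assms(2) abs_sfun_less_1[of r0] abs_sfun_less_1[of rb]
    unfolding u_def by (simp add: abs_le_iff abs_less_iff field_simps)
  then show ?thesis
    using lam_plus_eq[OF assms(1), of r0 rb c] sfun_inv_le_iff[of "sfun \<mu>" u] abs_sfun_less_1[of \<mu>]
    unfolding u_def[symmetric] by (auto simp: sfun_inv_sfun u_def)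
qed

lemma lam_minus_le_ereal_iff:
  assumes "0 < k" "\<bar>sfun rb - sfun r0\<bar> \<le> k * c"
  shows "lam_minus k r0 rb c \<le> ereal \<mu> \<longleftrightarrow> sfun r0 + sfun rb - k * c \<le> 2 * sfun \<mu>"
proof -
  define u where "u = (sfun r0 + sfun rb - k * c) / 2"
  have "u < 1"
    using assms(2) abs_sfun_less_1[of r0] abs_sfun_less_1[of rb]
    unfolding u_def by (simp add: abs_le_iff abs_less_iff field_simps)
  then show ?thesis
    using lam_minus_eq[OF assms(1), of r0 rb c] sfun_inv_le_iff[of u "sfun \<mu>"] abs_sfun_less_1[of \<mu>]
    unfolding u_def[symmetric] by (auto simp: sfun_inv_sfun u_def)
qed

lemma lam_bounds_iff:
  assumes "0 < k" "\<bar>sfun rb - sfun r0\<bar> \<le> k * c"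
  shows "lam_minus k r0 rb c \<le> ereal \<mu> \<and> ereal \<mu> \<le> lam_plus k r0 rb c
    \<longleftrightarrow> \<bar>sfun \<mu> - sfun r0\<bar> + \<bar>sfun \<mu> - sfun rb\<bar> \<le> k * c"
  using assms ereal_le_lam_plus_iff[OF assms] lam_minus_le_ereal_iff[OF assms]
  by (auto simp: abs_if)

section \<open>Absolutely continuous functions with a.e. bounded derivative\<close>

lemma abs_continuous_onD:
  assumes "abs_continuous_on a b f" "0 < \<epsilon>"
  obtains \<delta> where "0 < \<delta>"
    "\<And>I u v. finite I \<Longrightarrow> (\<forall>i\<in>I. a \<le> u i \<and> u i \<le> v i \<and> v i \<le> b) \<Longrightarrow>
      (\<forall>i\<in>I. \<forall>j\<in>I. i \<noteq> j \<longrightarrow> v i \<le> u j \<or> v j \<le> u i) \<Longrightarrow>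
      (\<Sum>i\<in>I. v i - u i) < \<delta> \<Longrightarrow> (\<Sum>i\<in>I. \<bar>f (v i) - f (u i)\<bar>) < \<epsilon>"
proof -
  obtain \<delta> where "0 < \<delta>" and \<delta>: "\<forall>(n::nat) u v. (\<forall>i<n. a \<le> u i \<and> u i \<le> v i \<and> v i \<le> b) \<and>
      (\<forall>i<n. \<forall>j<n. i \<noteq> j \<longrightarrow> v i \<le> u j \<or> v j \<le> u i) \<and>
      (\<Sum>i<n. v i - u i) < \<delta> \<longrightarrow> (\<Sum>i<n. \<bar>f (v i) - f (u i)\<bar>) < \<epsilon>"
    using assms(1)[unfolded abs_continuous_on_def, rule_format, OF assms(2)]
    by (elim exE conjE) (rule that)
  show ?thesis
  proof (rule that[OF \<open>0 < \<delta>\<close>])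
    fix I :: "'i set" and u v :: "'i \<Rightarrow> real"
    assume "finite I" and I: "\<forall>i\<in>I. a \<le> u i \<and> u i \<le> v i \<and> v i \<le> b"
      "\<forall>i\<in>I. \<forall>j\<in>I. i \<noteq> j \<longrightarrow> v i \<le> u j \<or> v j \<le> u i" "(\<Sum>i\<in>I. v i - u i) < \<delta>"
    obtain h where h: "bij_betw h {..<card I} I"
      using ex_bij_betw_nat_finite[OF \<open>finite I\<close>] by (auto simp: lessThan_atLeast0)
    have reindex: "(\<Sum>i<card I. F (h i)) = (\<Sum>i\<in>I. F i)" for F :: "'i \<Rightarrow> real"
      using sum.reindex_bij_betw[OF h] .
    have hI: "h i \<in> I" if "i < card I" for i
      using bij_betwE[OF h] that by blast
    have h_inj: "h i \<noteq> h j" if "i < card I" "j < card I" "i \<noteq> j" for i j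
      using bij_betw_imp_inj_on[OF h] that by (auto dest: inj_onD)
    have "(\<Sum>i<card I. \<bar>f (v (h i)) - f (u (h i))\<bar>) < \<epsilon>"
    proof (rule \<delta>[rule_format, OF conjI[OF _ conjI]])
      show "\<forall>i<card I. a \<le> u (h i) \<and> u (h i) \<le> v (h i) \<and> v (h i) \<le> b"
        using I(1) hI by blast
      show "\<forall>i<card I. \<forall>j<card I. i \<noteq> j \<longrightarrow> v (h i) \<le> u (h j) \<or> v (h j) \<le> u (h i)"
        using I(2) hI h_inj by blast
      show "(\<Sum>i<card I. v (h i) - u (h i)) < \<delta>"
        using I(3) reindex[of "\<lambda>i. v i - u i"] by simp
    qed
    then show "(\<Sum>i\<in>I. \<bar>f (v i) - f (u i)\<bar>) < \<epsilon>"
      using reindex[of "\<lambda>i. \<bar>f (v i) - f (u i)\<bar>"] by simp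
  qed
qed

lemma abs_continuous_on_compose_lipschitz:
  assumes ac: "abs_continuous_on a b f" and "0 \<le> L"
    and lip: "\<And>x y. \<bar>h x - h y\<bar> \<le> L * \<bar>x - y\<bar>"
  shows "abs_continuous_on a b (\<lambda>x. h (f x))"
  unfolding abs_continuous_on_def
proof (intro allI impI)
  fix \<epsilon> :: real assume "0 < \<epsilon>"
  with \<open>0 \<le> L\<close> have "0 < \<epsilon> / (L + 1)" by simp
  then obtain \<delta> where "0 < \<delta>" and \<delta>: "\<forall>(n::nat) u v. (\<forall>i<n. a \<le> u i \<and> u i \<le> v i \<and> v i \<le> b) \<and>
      (\<forall>i<n. \<forall>j<n. i \<noteq> j \<longrightarrow> v i \<le> u j \<or> v j \<le> u i) \<and>
      (\<Sum>i<n. v i - u i) < \<delta> \<longrightarrow> (\<Sum>i<n. \<bar>f (v i) - f (u i)\<bar>) < \<epsilon> / (L + 1)"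
    using ac[unfolded abs_continuous_on_def, rule_format, OF \<open>0 < \<epsilon> / (L + 1)\<close>]
    by (elim exE conjE) (rule that)
  show "\<exists>\<delta>>0. \<forall>(n::nat) u v. (\<forall>i<n. a \<le> u i \<and> u i \<le> v i \<and> v i \<le> b) \<and>
      (\<forall>i<n. \<forall>j<n. i \<noteq> j \<longrightarrow> v i \<le> u j \<or> v j \<le> u i) \<and> (\<Sum>i<n. v i - u i) < \<delta> \<longrightarrow>
      (\<Sum>i<n. \<bar>h (f (v i)) - h (f (u i))\<bar>) < \<epsilon>"
  proof (intro exI[of _ \<delta>] conjI allI impI \<open>0 < \<delta>\<close>)
    fix n :: nat and u v :: "nat \<Rightarrow> real"
    assume "(\<forall>i<n. a \<le> u i \<and> u i \<le> v i \<and> v i \<le> b) \<and>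
      (\<forall>i<n. \<forall>j<n. i \<noteq> j \<longrightarrow> v i \<le> u j \<or> v j \<le> u i) \<and> (\<Sum>i<n. v i - u i) < \<delta>"
    then have small: "(\<Sum>i<n. \<bar>f (v i) - f (u i)\<bar>) < \<epsilon> / (L + 1)"
      using \<delta> by blast
    have "(\<Sum>i<n. \<bar>h (f (v i)) - h (f (u i))\<bar>) \<le> L * (\<Sum>i<n. \<bar>f (v i) - f (u i)\<bar>)"
      unfolding sum_distrib_left by (intro sum_mono lip)
    also have "\<dots> \<le> L * (\<epsilon> / (L + 1))"
      using small \<open>0 \<le> L\<close> by (intro mult_left_mono) auto
    also have "\<dots> < \<epsilon>"
      using \<open>0 < \<epsilon>\<close> \<open>0 \<le> L\<close> by (simp add: field_simps)
    finally show "(\<Sum>i<n. \<bar>h (f (v i)) - h (f (u i))\<bar>) < \<epsilon>" .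
  qed
qed

lemma tagged_division_of_real_piece:
  assumes "p tagged_division_of {a..b::real}" "(x, K) \<in> p"
  shows "K = {Inf K..Sup K}" "a \<le> Inf K" "Inf K \<le> x" "x \<le> Sup K" "Sup K \<le> b"
    and "content K = Sup K - Inf K"
proof -
  obtain u v where "K = {u..v}" using tagged_division_ofD(4)[OF assms] by (auto simp: cbox_interval)
  moreover have "x \<in> K" "K \<subseteq> {a..b}" using tagged_division_ofD(2,3)[OF assms] by auto
  ultimately show "K = {Inf K..Sup K}" "a \<le> Inf K" "Inf K \<le> x" "x \<le> Sup K" "Sup K \<le> b"
    and "content K = Sup K - Inf K"
    by (auto simp: content_real)
qed

lemma tagged_division_of_real_nonoverlapping:
  assumes p: "p tagged_division_of {a..b::real}" and "(x, K) \<in> p" "(x', K') \<in> p" "(x, K) \<noteq> (x', K')"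
    and "0 < content K" "0 < content K'"
  shows "Sup K \<le> Inf K' \<or> Sup K' \<le> Inf K"
proof (rule ccontr)
  assume overlap: "\<not> (Sup K \<le> Inf K' \<or> Sup K' \<le> Inf K)"
  have "interior K = {Inf K<..<Sup K}" "interior K' = {Inf K'<..<Sup K'}"
    using tagged_division_of_real_piece(1)[OF p] assms(2,3) by (metis interior_atLeastAtMost_real)+
  moreover have "Inf K < Sup K" "Inf K' < Sup K'"
    using tagged_division_of_real_piece(6)[OF p] assms(2,3,5,6) by force+
  ultimately have "(max (Inf K) (Inf K') + min (Sup K) (Sup K')) / 2 \<in> interior K \<inter> interior K'"
    using overlap by auto
  with tagged_division_ofD(5)[OF p assms(2-4)] show False by blast
qed

lemma tagged_piece_increment_le:
  assumes p: "p tagged_division_of {a..b}" "\<gamma> fine p" "(x, K) \<in> p"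
    and lip: "\<And>y. y \<in> {a..b} \<Longrightarrow> y \<in> \<gamma> x \<Longrightarrow> \<bar>g y - g x\<bar> \<le> L * \<bar>y - x\<bar>"
  shows "\<bar>g (Sup K) - g (Inf K)\<bar> \<le> L * content K"
proof -
  note K = tagged_division_of_real_piece[OF p(1,3)]
  have "Inf K \<in> K" "Sup K \<in> K"
    using K(3,4) by (metis K(1) atLeastAtMost_iff order_refl order_trans)+
  moreover have "K \<subseteq> \<gamma> x" "K \<subseteq> {a..b}"
    using fineD[OF p(2,3)] tagged_division_ofD(3)[OF p(1,3)] by auto
  ultimately have "Sup K \<in> {a..b}" "Sup K \<in> \<gamma> x" "Inf K \<in> {a..b}" "Inf K \<in> \<gamma> x" by blast+
  then have "\<bar>g (Sup K) - g x\<bar> \<le> L * (Sup K - x)" "\<bar>g (Inf K) - g x\<bar> \<le> L * (x - Inf K)"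
    using lip[of "Sup K"] lip[of "Inf K"] K(3,4) by auto
  moreover have "\<bar>g (Sup K) - g (Inf K)\<bar> \<le> \<bar>g (Sup K) - g x\<bar> + \<bar>g (Inf K) - g x\<bar>"
    using abs_triangle_ineq[of "g (Sup K) - g x" "g x - g (Inf K)"] by (simp add: abs_minus_commute)
  moreover have "L * content K = L * (Sup K - x) + L * (x - Inf K)"
    unfolding K(6) by (simp add: algebra_simps)
  ultimately show ?thesis by linarith
qed

lemma abs_continuous_on_tagged_division:
  assumes "abs_continuous_on a b f" "0 < \<epsilon>"
  obtains \<delta> where "0 < \<delta>"
    "\<And>p q. p tagged_division_of {a..b} \<Longrightarrow> q \<subseteq> p \<Longrightarrow> (\<Sum>(x, K)\<in>q. content K) < \<delta> \<Longrightarrow>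
      (\<Sum>(x, K)\<in>q. \<bar>f (Sup K) - f (Inf K)\<bar>) < \<epsilon>"
proof -
  obtain \<delta> where "0 < \<delta>" and \<delta>: "\<And>(I :: (real \<times> real set) set) u v. finite I \<Longrightarrow>
      (\<forall>i\<in>I. a \<le> u i \<and> u i \<le> v i \<and> v i \<le> b) \<Longrightarrow>
      (\<forall>i\<in>I. \<forall>j\<in>I. i \<noteq> j \<longrightarrow> v i \<le> u j \<or> v j \<le> u i) \<Longrightarrow>
      (\<Sum>i\<in>I. v i - u i) < \<delta> \<Longrightarrow> (\<Sum>i\<in>I. \<bar>f (v i) - f (u i)\<bar>) < \<epsilon>"
    by (rule abs_continuous_onD[OF assms]) (rule that)
  show ?thesis
  proof (rule that[OF \<open>0 < \<delta>\<close>])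
    fix p q assume p: "p tagged_division_of {a..b}" and "q \<subseteq> p"
      and small: "(\<Sum>(x, K)\<in>q. content K) < \<delta>"
    have "finite q" using \<open>q \<subseteq> p\<close> p finite_subset by blast
    have piece: "a \<le> Inf (snd y)" "Inf (snd y) \<le> Sup (snd y)" "Sup (snd y) \<le> b"
      "content (snd y) = Sup (snd y) - Inf (snd y)" if "y \<in> q" for y
      using tagged_division_of_real_piece(2-6)[OF p, of "fst y" "snd y"] that \<open>q \<subseteq> p\<close> by auto
    \<comment> \<open>degenerate pieces contribute nothing, and the others do not overlap\<close>
    define I where "I = {y\<in>q. 0 < content (snd y)}"
    have "(\<Sum>(x, K)\<in>q. \<bar>f (Sup K) - f (Inf K)\<bar>) = (\<Sum>y\<in>I. \<bar>f (Sup (snd y)) - f (Inf (snd y))\<bar>)"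
      unfolding case_prod_unfold
    proof (rule sum.mono_neutral_right[OF \<open>finite q\<close>])
      show "\<forall>y\<in>q - I. \<bar>f (Sup (snd y)) - f (Inf (snd y))\<bar> = 0"
      proof
        fix y assume "y \<in> q - I"
        with piece[of y] have "Sup (snd y) = Inf (snd y)" unfolding I_def by auto
        then show "\<bar>f (Sup (snd y)) - f (Inf (snd y))\<bar> = 0" by simp
      qed
    qed (auto simp: I_def)
    also have "\<dots> < \<epsilon>"
    proof (rule \<delta>)
      show "finite I" using \<open>finite q\<close> unfolding I_def by simp
      show "\<forall>y\<in>I. a \<le> Inf (snd y) \<and> Inf (snd y) \<le> Sup (snd y) \<and> Sup (snd y) \<le> b"
        using piece unfolding I_def by simp
      show "\<forall>y\<in>I. \<forall>y'\<in>I. y \<noteq> y' \<longrightarrow> Sup (snd y) \<le> Inf (snd y') \<or> Sup (snd y') \<le> Inf (snd y)"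
        using tagged_division_of_real_nonoverlapping[OF p] \<open>q \<subseteq> p\<close> unfolding I_def by force
      have "(\<Sum>y\<in>I. Sup (snd y) - Inf (snd y)) = (\<Sum>y\<in>I. content (snd y))"
        using piece unfolding I_def by simp
      also have "\<dots> \<le> (\<Sum>(x, K)\<in>q. content K)"
        unfolding I_def case_prod_unfold using \<open>finite q\<close> by (intro sum_mono2) auto
      finally show "(\<Sum>y\<in>I. Sup (snd y) - Inf (snd y)) < \<delta>" using small by simp
    qed
    finally show "(\<Sum>(x, K)\<in>q. \<bar>f (Sup K) - f (Inf K)\<bar>) < \<epsilon>" .
  qed
qed

lemma negligible_tagged_division_content:
  fixes a b :: real
  assumes "negligible E" "0 < \<delta>"
  obtains \<gamma> where "gauge \<gamma>"
    "\<And>p. p tagged_division_of {a..b} \<Longrightarrow> \<gamma> fine p \<Longrightarrow> (\<Sum>(x, K)\<in>{y\<in>p. fst y \<in> E}. content K) < \<delta>"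
proof -
  have "(indicator E has_integral (0::real)) {a..b}"
    using assms(1) unfolding negligible_def by (metis cbox_interval)
  from has_integral_real[THEN iffD1, rule_format, OF this assms(2)]
  obtain \<gamma> where "gauge \<gamma>" and \<gamma>: "\<forall>p. p tagged_division_of {a..b} \<and> \<gamma> fine p \<longrightarrow>
      norm ((\<Sum>(x, K)\<in>p. content K *\<^sub>R (indicator E x :: real)) - 0) < \<delta>"
    by (elim exE conjE) (rule that)
  show ?thesis
  proof (rule that[OF \<open>gauge \<gamma>\<close>])
    fix p assume p: "p tagged_division_of {a..b}" "\<gamma> fine p"
    then have "finite p" by blast
    have "(\<Sum>(x, K)\<in>{y\<in>p. fst y \<in> E}. content K) = (\<Sum>y\<in>p. if fst y \<in> E then content (snd y) else 0)"
      unfolding case_prod_unfold using \<open>finite p\<close> by (rule sum.inter_filter)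
    also have "\<dots> = (\<Sum>(x, K)\<in>p. content K *\<^sub>R (indicator E x :: real))"
      unfolding case_prod_unfold by (intro sum.cong) (auto simp: indicator_def)
    also have "\<dots> < \<delta>" using \<gamma> p by auto
    finally show "(\<Sum>(x, K)\<in>{y\<in>p. fst y \<in> E}. content K) < \<delta>" .
  qed
qed

lemma has_real_derivative_bound_gauge:
  assumes der: "\<And>x. x \<in> S \<Longrightarrow> \<exists>D. (g has_real_derivative D) (at x within T) \<and> \<bar>D\<bar> \<le> B"
    and "0 < \<epsilon>"
  obtains \<gamma> where "gauge \<gamma>"
    "\<And>x y. x \<in> S \<Longrightarrow> y \<in> T \<Longrightarrow> y \<in> \<gamma> x \<Longrightarrow> \<bar>g y - g x\<bar> \<le> (B + \<epsilon>) * \<bar>y - x\<bar>"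
proof -
  have "\<exists>r>0. x \<in> S \<longrightarrow> (\<forall>y\<in>T. \<bar>y - x\<bar> < r \<longrightarrow> \<bar>g y - g x\<bar> \<le> (B + \<epsilon>) * \<bar>y - x\<bar>)" for x
  proof (cases "x \<in> S")
    case True
    then obtain D where D: "(g has_real_derivative D) (at x within T)" "\<bar>D\<bar> \<le> B" using der by blast
    then obtain r where "0 < r"
      and r: "\<forall>y\<in>T. \<bar>y - x\<bar> < r \<longrightarrow> \<bar>g y - g x - D * (y - x)\<bar> \<le> \<epsilon> * \<bar>y - x\<bar>"
      using \<open>0 < \<epsilon>\<close> unfolding has_field_derivative_def has_derivative_within_alt
      by (auto simp: real_norm_def)
    have "\<bar>g y - g x\<bar> \<le> (B + \<epsilon>) * \<bar>y - x\<bar>" if "y \<in> T" "\<bar>y - x\<bar> < r" for y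
    proof -
      have "\<bar>g y - g x\<bar> \<le> \<bar>g y - g x - D * (y - x)\<bar> + \<bar>D\<bar> * \<bar>y - x\<bar>"
        by (metis abs_mult abs_triangle_ineq diff_add_cancel)
      also have "\<dots> \<le> \<epsilon> * \<bar>y - x\<bar> + B * \<bar>y - x\<bar>"
        using r that D(2) by (intro add_mono mult_right_mono) auto
      finally show ?thesis by (simp add: distrib_right)
    qed
    then show ?thesis using \<open>0 < r\<close> by blast
  qed (auto intro: zero_less_one)
  then obtain R where R: "\<And>x. 0 < R x"
    "\<And>x y. x \<in> S \<Longrightarrow> y \<in> T \<Longrightarrow> \<bar>y - x\<bar> < R x \<Longrightarrow> \<bar>g y - g x\<bar> \<le> (B + \<epsilon>) * \<bar>y - x\<bar>"
    by metis
  show ?thesis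
  proof (rule that)
    show "gauge (\<lambda>x. ball x (R x))" using R(1) by (intro gauge_ball_dependent) blast
    show "\<bar>g y - g x\<bar> \<le> (B + \<epsilon>) * \<bar>y - x\<bar>" if "x \<in> S" "y \<in> T" "y \<in> ball x (R x)" for x y
      using R(2) that by (simp add: dist_real_def abs_minus_commute)
  qed
qed

lemma abs_continuous_on_increment_le:
  assumes ac: "abs_continuous_on a b g" and "a \<le> b" "0 \<le> B" "negligible E"
    and der: "\<And>x. x \<in> {a..b} - E \<Longrightarrow> \<exists>D. (g has_real_derivative D) (at x within {a..b}) \<and> \<bar>D\<bar> \<le> B"
  shows "\<bar>g b - g a\<bar> \<le> B * (b - a)"
proof (rule field_le_epsilon)
  fix e :: real assume "0 < e"
  define \<epsilon> where "\<epsilon> = e / (2 * (b - a + 1))"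
  have "0 < \<epsilon>" using \<open>0 < e\<close> \<open>a \<le> b\<close> unfolding \<epsilon>_def by simp
  have "\<epsilon> * (b - a) \<le> \<epsilon> * (b - a + 1)" using \<open>0 < \<epsilon>\<close> by simp
  also have "\<dots> = e / 2" using \<open>a \<le> b\<close> unfolding \<epsilon>_def by (simp add: field_simps)
  finally have \<epsilon>_small: "\<epsilon> * (b - a) \<le> e / 2" .
  obtain \<delta> where "0 < \<delta>" and \<delta>: "\<And>p q. p tagged_division_of {a..b} \<Longrightarrow> q \<subseteq> p \<Longrightarrow>
      (\<Sum>(x, K)\<in>q. content K) < \<delta> \<Longrightarrow> (\<Sum>(x, K)\<in>q. \<bar>g (Sup K) - g (Inf K)\<bar>) < e / 2"
    using abs_continuous_on_tagged_division[OF ac, of "e / 2"] \<open>0 < e\<close> by auto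
  obtain \<gamma>1 where "gauge \<gamma>1" and \<gamma>1: "\<And>p. p tagged_division_of {a..b} \<Longrightarrow> \<gamma>1 fine p \<Longrightarrow>
      (\<Sum>(x, K)\<in>{y\<in>p. fst y \<in> E}. content K) < \<delta>"
    using negligible_tagged_division_content[OF \<open>negligible E\<close> \<open>0 < \<delta>\<close>] by blast
  obtain \<gamma>2 where "gauge \<gamma>2" and \<gamma>2: "\<And>x y. x \<in> {a..b} - E \<Longrightarrow> y \<in> {a..b} \<Longrightarrow> y \<in> \<gamma>2 x \<Longrightarrow>
      \<bar>g y - g x\<bar> \<le> (B + \<epsilon>) * \<bar>y - x\<bar>"
    using has_real_derivative_bound_gauge[OF der \<open>0 < \<epsilon>\<close>] by blast
  obtain p where p: "p tagged_division_of {a..b}" and "\<gamma>1 fine p" "\<gamma>2 fine p"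
    using fine_division_exists_real[OF gauge_Int[OF \<open>gauge \<gamma>1\<close> \<open>gauge \<gamma>2\<close>]] fine_Int by metis
  define q where "q = {y\<in>p. fst y \<in> E}"
  have "finite p" "q \<subseteq> p" using p unfolding q_def by auto
  \<comment> \<open>pieces tagged outside \<open>E\<close> are controlled by the derivative, the others by absolute continuity\<close>
  have regular: "\<bar>g (Sup K) - g (Inf K)\<bar> \<le> (B + \<epsilon>) * content K" if "(x, K) \<in> p - q" for x K
  proof (rule tagged_piece_increment_le[OF p \<open>\<gamma>2 fine p\<close>])
    show "(x, K) \<in> p" using that by blast
    have "x \<in> {a..b} - E"
      using tagged_division_of_real_piece(2-5)[OF p, of x K] that unfolding q_def by auto
    then show "\<bar>g y - g x\<bar> \<le> (B + \<epsilon>) * \<bar>y - x\<bar>" if "y \<in> {a..b}" "y \<in> \<gamma>2 x" for y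
      using \<gamma>2 that by blast
  qed
  have "\<bar>g b - g a\<bar> = \<bar>\<Sum>(x, K)\<in>p. g (Sup K) - g (Inf K)\<bar>"
    using additive_tagged_division_1[OF \<open>a \<le> b\<close> p, of g] by simp
  also have "\<dots> \<le> (\<Sum>(x, K)\<in>p. \<bar>g (Sup K) - g (Inf K)\<bar>)"
    unfolding case_prod_unfold by (rule sum_abs)
  also have "\<dots> = (\<Sum>(x, K)\<in>p - q. \<bar>g (Sup K) - g (Inf K)\<bar>) + (\<Sum>(x, K)\<in>q. \<bar>g (Sup K) - g (Inf K)\<bar>)"
    using sum.subset_diff[OF \<open>q \<subseteq> p\<close> \<open>finite p\<close>] by blast
  also have "\<dots> \<le> (\<Sum>(x, K)\<in>p. (B + \<epsilon>) * content K) + e / 2"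
  proof (rule add_mono)
    have "(\<Sum>(x, K)\<in>p - q. \<bar>g (Sup K) - g (Inf K)\<bar>) \<le> (\<Sum>(x, K)\<in>p - q. (B + \<epsilon>) * content K)"
      using regular by (intro sum_mono) auto
    also have "\<dots> \<le> (\<Sum>(x, K)\<in>p. (B + \<epsilon>) * content K)"
      using \<open>finite p\<close> \<open>0 \<le> B\<close> \<open>0 < \<epsilon>\<close> by (intro sum_mono2) auto
    finally show "(\<Sum>(x, K)\<in>p - q. \<bar>g (Sup K) - g (Inf K)\<bar>) \<le> (\<Sum>(x, K)\<in>p. (B + \<epsilon>) * content K)" .
    show "(\<Sum>(x, K)\<in>q. \<bar>g (Sup K) - g (Inf K)\<bar>) \<le> e / 2"
      using \<delta>[OF p \<open>q \<subseteq> p\<close>] \<gamma>1[OF p \<open>\<gamma>1 fine p\<close>] unfolding q_def by simp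
  qed
  also have "(\<Sum>(x, K)\<in>p. (B + \<epsilon>) * content K) = (B + \<epsilon>) * (b - a)"
    using additive_content_tagged_division[of p a b] p \<open>a \<le> b\<close>
    by (simp add: sum_distrib_left[symmetric] case_prod_unfold cbox_interval)
  finally show "\<bar>g b - g a\<bar> \<le> B * (b - a) + e"
    using \<epsilon>_small by (simp add: distrib_right)
qed

lemma sfun_increment_le:
  assumes ac: "abs_continuous_on a b f" and "a \<le> b" "0 \<le> \<kappa>"
    and der: "AE x in lborel. x \<in> {a..b} \<longrightarrow> (f has_real_derivative f' x) (at x within {a..b})"
    and curv: "AE x in lborel. x \<in> {a..b} \<longrightarrow> \<bar>f' x\<bar> \<le> \<kappa> * (1 + (f x)\<^sup>2) powr (3/2)"
  shows "\<bar>sfun (f b) - sfun (f a)\<bar> \<le> \<kappa> * (b - a)"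
proof -
  have "AE x in lborel. x \<in> {a..b} \<longrightarrow> (f has_real_derivative f' x) (at x within {a..b}) \<and>
      \<bar>f' x\<bar> \<le> \<kappa> * (1 + (f x)\<^sup>2) powr (3/2)"
    using der curv by eventually_elim blast
  then have "AE x in lebesgue. x \<in> {a..b} \<longrightarrow> (f has_real_derivative f' x) (at x within {a..b}) \<and>
      \<bar>f' x\<bar> \<le> \<kappa> * (1 + (f x)\<^sup>2) powr (3/2)"
    by (rule AE_completion)
  then obtain N where "negligible N" and N: "\<And>x. x \<in> {a..b} - N \<Longrightarrow>
      (f has_real_derivative f' x) (at x within {a..b}) \<and> \<bar>f' x\<bar> \<le> \<kappa> * (1 + (f x)\<^sup>2) powr (3/2)"
    unfolding eventually_ae_filter_negligible by blast
  show ?thesis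
  proof (rule abs_continuous_on_increment_le[OF _ \<open>a \<le> b\<close> \<open>0 \<le> \<kappa>\<close> \<open>negligible N\<close>])
    show "abs_continuous_on a b (\<lambda>x. sfun (f x))"
      by (rule abs_continuous_on_compose_lipschitz[OF ac, of 1]) (simp_all add: sfun_lipschitz)
    fix x assume "x \<in> {a..b} - N"
    then have d: "(f has_real_derivative f' x) (at x within {a..b})"
      and bd: "\<bar>f' x\<bar> \<le> \<kappa> * (1 + (f x)\<^sup>2) powr (3/2)" using N by auto
    have pos: "0 < 1 + (f x)\<^sup>2" by (simp add: add_pos_nonneg)
    then have "0 < (1 + (f x)\<^sup>2) powr (3/2)" by simp
    with pos have "\<bar>1 / (1 + (f x)\<^sup>2) powr (3/2) * f' x\<bar> \<le> \<kappa>"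
      using bd by (simp add: abs_mult divide_le_eq)
    then show "\<exists>D. ((\<lambda>x. sfun (f x)) has_real_derivative D) (at x within {a..b}) \<and> \<bar>D\<bar> \<le> \<kappa>"
      using DERIV_chain2[OF sfun_has_real_derivative d] by blast
  qed
qed

section \<open>The profile \<open>\<zeta>\<close> in the coordinate \<open>sfun\<close>\<close>

lemma sort5_nth_2:
  fixes a b c d e :: "'a::linorder"
  assumes "a \<le> e" "b \<le> d" "a \<le> d" "b \<le> e"
  shows "sort [a, b, c, d, e] ! 2 = max (max a b) (min c (min d e))"
proof -
  have ab: "mset [min a b, max a b] = mset [a, b]" and de: "mset [min d e, max d e] = mset [d, e]"
    by (auto simp: min_def max_def)
  have lo_hi: "max a b \<le> min d e" using assms by auto
  have sorted_eq: "sort [a, b, c, d, e] ! 2 = ys ! 2"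
    if "mset ys = mset [a, b, c, d, e]" "sorted ys" for ys
    using properties_for_sort[OF that] by simp
  consider "c \<le> max a b" | "max a b \<le> c" "c \<le> min d e" | "min d e \<le> c" by (metis linear)
  then show ?thesis
  proof cases
    case 1
    let ?ys = "[min (min a b) c, max (min a b) c, max a b, min d e, max d e]"
    have "mset [min (min a b) c, max (min a b) c] = mset [min a b, c]"
      by (auto simp: min_def[of "min a b" c] max_def[of "min a b" c])
    then have "mset ?ys = mset [a, b, c, d, e]" using ab de by (simp add: add_mset_commute)
    moreover have "sorted ?ys" using 1 lo_hi by (auto simp: min_def max_def)
    ultimately have "sort [a, b, c, d, e] ! 2 = ?ys ! 2" by (rule sorted_eq)
    then show ?thesis using 1 lo_hi by (auto simp: max_def min_def)
  next
    case 2
    let ?ys = "[min a b, max a b, c, min d e, max d e]"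
    have "mset ?ys = mset [a, b, c, d, e]" using ab de by (simp add: add_mset_commute)
    moreover have "sorted ?ys" using 2 lo_hi by (auto simp: min_def max_def)
    ultimately have "sort [a, b, c, d, e] ! 2 = ?ys ! 2" by (rule sorted_eq)
    then show ?thesis using 2 lo_hi by (auto simp: max_def min_def)
  next
    case 3
    let ?ys = "[min a b, max a b, min d e, min c (max d e), max c (max d e)]"
    have "mset [min c (max d e), max c (max d e)] = mset [c, max d e]"
      by (auto simp: min_def[of c "max d e"] max_def[of c "max d e"])
    then have "mset ?ys = mset [a, b, c, d, e]" using ab de by (simp add: add_mset_commute)
    moreover have "sorted ?ys" using 3 lo_hi by (auto simp: min_def max_def)
    ultimately have "sort [a, b, c, d, e] ! 2 = ?ys ! 2" by (rule sorted_eq)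
    then show ?thesis using 3 lo_hi by (auto simp: max_def min_def)
  qed
qed

lemma mid5_mono:
  fixes F :: "'a::linorder \<Rightarrow> ereal"
  assumes "mono F" "a \<le> e" "b \<le> d" "a \<le> d" "b \<le> e"
  shows "mid5 (F a) (F b) (F c) (F d) (F e) = F (max (max a b) (min c (min d e)))"
proof -
  have "mid5 (F a) (F b) (F c) (F d) (F e) = max (max (F a) (F b)) (min (F c) (min (F d) (F e)))"
    unfolding mid5_def by (rule sort5_nth_2) (use assms in \<open>auto dest: monoD\<close>)
  also have "\<dots> = F (max (max a b) (min c (min d e)))"
    by (simp add: max_of_mono[OF \<open>mono F\<close>] min_of_mono[OF \<open>mono F\<close>])
  finally show ?thesis .
qed

text \<open>\<open>zeta_s s0 sb m (\<kappa>0 * x) (\<kappa>0 * c)\<close> is \<open>\<zeta>\<^sub>(\<^sub>\<mu>\<^sub>,\<^sub>c\<^sub>)(x)\<close> in the coordinate \<open>sfun\<close>, where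
  \<open>s0 = sfun r0\<close>, \<open>sb = sfun rb\<close>, \<open>m = sfun \<mu>\<close>: there the four outer arguments of the median are
  affine in \<open>x\<close> and pairwise ordered, which turns the median into this max-min expression.\<close>

definition zeta_s :: "real \<Rightarrow> real \<Rightarrow> real \<Rightarrow> real \<Rightarrow> real \<Rightarrow> real" where
  "zeta_s s0 sb m X C = max (max (X - C + sb) (- X + s0)) (min m (min (X + s0) (- X + C + sb)))"

lemma zeta_s_eq_iff:
  assumes "0 \<le> X" "X \<le> C" "\<bar>sb - s0\<bar> \<le> C"
  shows "zeta_s s0 sb m X C = m \<longleftrightarrow> \<bar>m - s0\<bar> \<le> X \<and> \<bar>m - sb\<bar> \<le> C - X"
  using assms unfolding zeta_s_def by (auto simp: max_def min_def abs_if split: if_splits)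

lemma zeta_s_left:
  assumes "0 \<le> X" "X \<le> \<bar>m - s0\<bar>" "\<bar>m - s0\<bar> + \<bar>m - sb\<bar> \<le> B" "B \<le> C"
  shows "zeta_s s0 sb m X C = zeta_s s0 sb m X B"
  using assms unfolding zeta_s_def by (auto simp: max_def min_def abs_if split: if_splits)

lemma zeta_s_right:
  assumes "X \<le> C" "C - X \<le> \<bar>m - sb\<bar>" "\<bar>m - s0\<bar> + \<bar>m - sb\<bar> \<le> B" "B \<le> C"
  shows "zeta_s s0 sb m X C = zeta_s s0 sb m (X - C + B) B"
  using assms unfolding zeta_s_def by (auto simp: max_def min_def abs_if split: if_splits)

lemma abs_zeta_s_less_1:
  assumes "0 \<le> X" "X \<le> C" "\<bar>s0\<bar> < 1" "\<bar>sb\<bar> < 1" "\<bar>m\<bar> < 1"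
  shows "\<bar>zeta_s s0 sb m X C\<bar> < 1"
  using assms unfolding zeta_s_def by (auto simp: max_def min_def abs_if split: if_splits)

lemma zeta_eq_Fe_zeta_s:
  assumes "0 \<le> k" "0 \<le> x" "x \<le> c" "\<bar>sfun rb - sfun r0\<bar> \<le> k * c"
  shows "zeta k r0 rb \<mu> c x = Fe (zeta_s (sfun r0) (sfun rb) (sfun \<mu>) (k * x) (k * c))"
proof -
  have "0 \<le> k * x" "k * x \<le> k * c" using assms by (auto intro: mult_left_mono)
  then have "mid5 (Fe (k * (x - c) + sfun rb)) (Fe (- k * x + sfun r0)) (Fe (sfun \<mu>))
      (Fe (k * x + sfun r0)) (Fe (- k * (x - c) + sfun rb))
    = Fe (max (max (k * (x - c) + sfun rb) (- k * x + sfun r0))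
        (min (sfun \<mu>) (min (k * x + sfun r0) (- k * (x - c) + sfun rb))))"
    using assms(4) by (intro mid5_mono[OF mono_Fe]) (auto simp: algebra_simps abs_le_iff)
  then show ?thesis
    unfolding zeta_def hm_def gm_def gp_def hp_def zeta_s_def Fe_sfun[symmetric]
    by (simp add: algebra_simps)
qed

locale zeta_profile =
  fixes k r0 rb \<mu> :: real
  assumes k_pos: "0 < k"
begin

definition \<alpha> :: real where "\<alpha> = \<bar>sfun \<mu> - sfun r0\<bar> / k"
definition \<beta> :: real where "\<beta> = \<bar>sfun \<mu> - sfun rb\<bar> / k"

definition zeta_real :: "real \<Rightarrow> real \<Rightarrow> real" where
  "zeta_real c x = sfun_inv (zeta_s (sfun r0) (sfun rb) (sfun \<mu>) (k * x) (k * c))"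

lemma \<alpha>_nonneg: "0 \<le> \<alpha>" and \<beta>_nonneg: "0 \<le> \<beta>"
  using k_pos unfolding \<alpha>_def \<beta>_def by simp_all

lemma k_mult_\<alpha>: "k * \<alpha> = \<bar>sfun \<mu> - sfun r0\<bar>" and k_mult_\<beta>: "k * \<beta> = \<bar>sfun \<mu> - sfun rb\<bar>"
  using k_pos unfolding \<alpha>_def \<beta>_def by simp_all

lemma \<alpha>_\<beta>_le_iff: "\<alpha> + \<beta> \<le> c \<longleftrightarrow> \<bar>sfun \<mu> - sfun r0\<bar> + \<bar>sfun \<mu> - sfun rb\<bar> \<le> k * c"
  using k_pos by (simp flip: k_mult_\<alpha> k_mult_\<beta> distrib_left)

lemma sfun_diff_le_if_\<alpha>_\<beta>_le: "\<alpha> + \<beta> \<le> c \<Longrightarrow> \<bar>sfun rb - sfun r0\<bar> \<le> k * c"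
  unfolding \<alpha>_\<beta>_le_iff by linarith

lemma abs_zeta_s_less_1_on:
  "x \<in> {0..c} \<Longrightarrow> \<bar>zeta_s (sfun r0) (sfun rb) (sfun \<mu>) (k * x) (k * c)\<bar> < 1"
  using k_pos by (intro abs_zeta_s_less_1) (auto simp: abs_sfun_less_1 mult_left_mono)

lemma zeta_eq_zeta_real:
  assumes "\<alpha> + \<beta> \<le> c" "x \<in> {0..c}"
  shows "zeta k r0 rb \<mu> c x = ereal (zeta_real c x)"
proof -
  show ?thesis
    using zeta_eq_Fe_zeta_s[of k x c rb r0 \<mu>] assms k_pos sfun_diff_le_if_\<alpha>_\<beta>_le
    unfolding zeta_real_def by (simp add: Fe_eq_ereal_iff abs_zeta_s_less_1_on)
qed

lemma continuous_on_zeta_real: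
  assumes "\<alpha> + \<beta> \<le> c"
  shows "continuous_on {0..c} (zeta_real c)"
proof -
  have "(\<lambda>x. zeta_s (sfun r0) (sfun rb) (sfun \<mu>) (k * x) (k * c)) ` {0..c} \<subseteq> {-1<..<1}"
    using abs_zeta_s_less_1_on by (auto simp: abs_less_iff)
  moreover have "continuous_on {0..c} (\<lambda>x. zeta_s (sfun r0) (sfun rb) (sfun \<mu>) (k * x) (k * c))"
    unfolding zeta_s_def by (intro continuous_intros)
  ultimately show ?thesis
    unfolding zeta_real_def using continuous_on_compose2[OF continuous_on_sfun_inv] by blast
qed

lemma zeta_real_eq_\<mu>_iff:
  assumes "\<alpha> + \<beta> \<le> c" "x \<in> {0..c}"
  shows "zeta_real c x = \<mu> \<longleftrightarrow> x \<in> {\<alpha>..c - \<beta>}"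
proof -
  have kx: "0 \<le> k * x" "k * x \<le> k * c" using assms k_pos by (auto intro: mult_left_mono)
  have "zeta_real c x = \<mu> \<longleftrightarrow> zeta_s (sfun r0) (sfun rb) (sfun \<mu>) (k * x) (k * c) = sfun \<mu>"
    unfolding zeta_real_def using kx
    by (metis abs_sfun_less_1 abs_zeta_s_less_1_on assms(2) sfun_inv_eq_iff sfun_inv_sfun)
  also have "\<dots> \<longleftrightarrow> k * \<alpha> \<le> k * x \<and> k * \<beta> \<le> k * (c - x)"
    using kx sfun_diff_le_if_\<alpha>_\<beta>_le[OF assms(1)] k_pos
    by (simp add: zeta_s_eq_iff k_mult_\<alpha> k_mult_\<beta> right_diff_distrib)
  also have "\<dots> \<longleftrightarrow> x \<in> {\<alpha>..c - \<beta>}" using k_pos by auto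
  finally show ?thesis .
qed

lemma zeta_real_left:
  assumes "\<alpha> + \<beta> \<le> b" "b \<le> c" "x \<in> {0..\<alpha>}"
  shows "zeta_real c x = zeta_real b x"
proof -
  have "0 \<le> k * x" "k * x \<le> k * \<alpha>" "k * b \<le> k * c"
    using assms k_pos by (auto intro: mult_left_mono)
  then show ?thesis
    unfolding zeta_real_def using assms(1) k_pos
    by (subst zeta_s_left[where B = "k * b"]) (auto simp: \<alpha>_\<beta>_le_iff k_mult_\<alpha>)
qed

lemma zeta_real_right:
  assumes "\<alpha> + \<beta> \<le> b" "b \<le> c" "x \<in> {c - \<beta>..c}"
  shows "zeta_real c x = zeta_real b (x + (b - c))"
proof -
  have "k * c - k * x \<le> k * \<beta>" "k * x \<le> k * c" "k * b \<le> k * c"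
    using assms k_pos by (auto simp flip: right_diff_distrib intro: mult_left_mono)
  moreover have "k * (x + (b - c)) = k * x - k * c + k * b" by (simp add: algebra_simps)
  ultimately show ?thesis
    unfolding zeta_real_def using assms(1) k_pos
    by (subst zeta_s_right[where B = "k * b"]) (auto simp: \<alpha>_\<beta>_le_iff k_mult_\<beta>)
qed

lemma integral_zeta_real_split:
  assumes "\<alpha> + \<beta> \<le> c"
  shows "integral {0..c} (zeta_real c)
    = integral {0..\<alpha>} (zeta_real c) + \<mu> * (c - \<alpha> - \<beta>) + integral {c - \<beta>..c} (zeta_real c)"
proof -
  have int: "zeta_real c integrable_on {\<alpha>..c}" "zeta_real c integrable_on {0..c}"
    using continuous_on_subset[OF continuous_on_zeta_real[OF assms]] \<alpha>_nonneg
    by (auto intro!: integrable_continuous_interval)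
  have "integral {\<alpha>..c - \<beta>} (zeta_real c) = integral {\<alpha>..c - \<beta>} (\<lambda>x. \<mu>)"
    using assms \<alpha>_nonneg \<beta>_nonneg by (intro integral_cong) (simp add: zeta_real_eq_\<mu>_iff)
  also have "\<dots> = \<mu> * (c - \<alpha> - \<beta>)" using assms by simp
  finally have "integral {\<alpha>..c - \<beta>} (zeta_real c) = \<mu> * (c - \<alpha> - \<beta>)" .
  moreover have
    "integral {0..\<alpha>} (zeta_real c) + integral {\<alpha>..c} (zeta_real c) = integral {0..c} (zeta_real c)"
    using assms \<alpha>_nonneg \<beta>_nonneg int(2)
    by (intro Henstock_Kurzweil_Integration.integral_combine) auto
  moreover have "integral {\<alpha>..c - \<beta>} (zeta_real c) + integral {c - \<beta>..c} (zeta_real c)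
      = integral {\<alpha>..c} (zeta_real c)"
    using assms \<beta>_nonneg int(1) by (intro Henstock_Kurzweil_Integration.integral_combine) auto
  ultimately show ?thesis by linarith
qed

lemma integral_zeta_real_diff:
  assumes "\<alpha> + \<beta> \<le> b" "b \<le> c"
  shows "integral {0..c} (zeta_real c) - integral {0..b} (zeta_real b) = \<mu> * (c - b)"
proof -
  have left: "integral {0..\<alpha>} (zeta_real c) = integral {0..\<alpha>} (zeta_real b)"
    using assms by (intro integral_cong zeta_real_left)
  have "integral {c - \<beta>..c} (zeta_real c) = integral {c - \<beta>..c} (zeta_real b \<circ> (+) (b - c))"
  proof (rule integral_cong)
    fix x assume "x \<in> {c - \<beta>..c}"
    then have "zeta_real c x = zeta_real b (x + (b - c))" by (rule zeta_real_right[OF assms])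
    then show "zeta_real c x = (zeta_real b \<circ> (+) (b - c)) x" by (simp add: add.commute)
  qed
  also have "\<dots> = integral {b - \<beta>..b} (zeta_real b)"
    using integral_shift_Icc_real[of "c - \<beta>" c "zeta_real b" "b - c"] by simp
  finally have right: "integral {c - \<beta>..c} (zeta_real c) = integral {b - \<beta>..b} (zeta_real b)" .
  have "integral {0..c} (zeta_real c) - integral {0..b} (zeta_real b)
      = \<mu> * (c - \<alpha> - \<beta>) - \<mu> * (b - \<alpha> - \<beta>)"
    using integral_zeta_real_split[of b] integral_zeta_real_split[of c] assms left right by linarith
  also have "\<dots> = \<mu> * (c - b)" by (simp add: algebra_simps)
  finally show ?thesis .
qed

lemma has_integral_zeta:
  assumes "\<alpha> + \<beta> \<le> c"
  shows "((\<lambda>x. real_of_ereal (zeta k r0 rb \<mu> c x)) has_integral integral {0..c} (zeta_real c))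
    {0..c}"
proof (rule has_integral_eq)
  show "(zeta_real c has_integral integral {0..c} (zeta_real c)) {0..c}"
    using continuous_on_zeta_real[OF assms]
    by (intro integrable_integral integrable_continuous_interval)
  show "zeta_real c x = real_of_ereal (zeta k r0 rb \<mu> c x)" if "x \<in> {0..c}" for x
    using zeta_eq_zeta_real[OF assms that] by simp
qed

lemma zeta_level_set:
  assumes "\<alpha> + \<beta> \<le> c"
  shows "{x\<in>{0..c}. zeta k r0 rb \<mu> c x = ereal \<mu>} = {\<alpha>..c - \<beta>}"
  using zeta_eq_zeta_real[OF assms] zeta_real_eq_\<mu>_iff[OF assms] \<alpha>_nonneg \<beta>_nonneg by auto

lemma zeta_definedI:
  assumes "0 < c" "\<alpha> + \<beta> \<le> c"
  shows "zeta_defined k r0 rb \<mu> c"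
  using assms zeta_eq_zeta_real[OF assms(2)]
    lam_bounds_iff[OF k_pos sfun_diff_le_if_\<alpha>_\<beta>_le[OF assms(2)]]
  unfolding zeta_defined_def \<alpha>_\<beta>_le_iff by auto

end

theorem lemma2p6:
  fixes \<kappa>0 r0 rb b c \<mu> :: real
  assumes k0: "0 < \<kappa>0" "\<kappa>0 < 1"
    and fex: "\<exists>f f'. abs_continuous_on 0 b f
        \<and> (AE x in lborel. x \<in> {0..b} \<longrightarrow> (f has_real_derivative f' x) (at x within {0..b}))
        \<and> set_borel_measurable lborel {0..b} f'
        \<and> set_integrable lborel {0..b} (\<lambda>x. (f' x)\<^sup>2)
        \<and> (AE x in lborel. x \<in> {0..b} \<longrightarrow> \<bar>f' x\<bar> \<le> \<kappa>0 * (1 + (f x)\<^sup>2) powr (3/2))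
        \<and> f 0 = r0 \<and> f b = rb"
    and bc: "0 < b" "b \<le> c"
    and mu: "lam_minus \<kappa>0 r0 rb b \<le> ereal \<mu>" "ereal \<mu> \<le> lam_plus \<kappa>0 r0 rb b"
  shows "zeta_defined \<kappa>0 r0 rb \<mu> c
    \<and> (\<lambda>x. real_of_ereal (zeta \<kappa>0 r0 rb \<mu> c x)) integrable_on {0..c}
    \<and> (\<lambda>x. real_of_ereal (zeta \<kappa>0 r0 rb \<mu> b x)) integrable_on {0..b}
    \<and> integral {0..c} (\<lambda>x. real_of_ereal (zeta \<kappa>0 r0 rb \<mu> c x))
        - integral {0..b} (\<lambda>x. real_of_ereal (zeta \<kappa>0 r0 rb \<mu> b x)) = \<mu> * (c - b)
    \<and> (\<exists>p q. p \<le> q \<and> {x\<in>{0..c}. zeta \<kappa>0 r0 rb \<mu> c x = ereal \<mu>} = {p..q} \<and> c - b \<le> q - p)"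
proof -
  interpret zeta_profile \<kappa>0 r0 rb \<mu> using k0(1) by unfold_locales
  obtain f f' where "abs_continuous_on 0 b f"
      "AE x in lborel. x \<in> {0..b} \<longrightarrow> (f has_real_derivative f' x) (at x within {0..b})"
      "AE x in lborel. x \<in> {0..b} \<longrightarrow> \<bar>f' x\<bar> \<le> \<kappa>0 * (1 + (f x)\<^sup>2) powr (3/2)"
      "f 0 = r0" "f b = rb"
    using fex by blast
  then have "\<bar>sfun rb - sfun r0\<bar> \<le> \<kappa>0 * b"
    using sfun_increment_le[of 0 b f \<kappa>0 f'] bc k0 by auto
  then have adm_b: "\<alpha> + \<beta> \<le> b"
    using mu lam_bounds_iff[OF k0(1)] \<alpha>_\<beta>_le_iff by blast
  then have adm_c: "\<alpha> + \<beta> \<le> c" using bc by linarith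
  show ?thesis
    using zeta_definedI[OF _ adm_c] has_integral_zeta[OF adm_c] has_integral_zeta[OF adm_b]
      integral_zeta_real_diff[OF adm_b bc(2)] zeta_level_set[OF adm_c] adm_b bc
    by (auto simp: integral_unique intro!: has_integral_integrable exI[of _ \<alpha>] exI[of _ "c - \<beta>"])
qed

end
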